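(* Let $d>k>1$. For any ground-truth heads $\mathbf{w}_{\ast,1},\dots,\mathbf{w}_{\ast,M}\in\mathbb{R}^k$, any full-rank $\mathbf{B}_0\in\mathbb{R}^{d\times k}$, any initial head $\mathbf{w}_0\in\mathbb{R}^k$, any $\delta_0\in(0,1/2]$, any step size $\alpha>0$ and any number of rounds $T$, there exists $\mathbf{B}_\ast\in\mathbb{R}^{d\times k}$ with orthonormal columns such that $\operatorname{dist}(\mathbf{B}_0,\mathbf{B}_\ast)=\delta_0$, $\mathbf{B}_\ast\bar{\mathbf{w}}_\ast\in\operatorname{col}(\mathbf{B}_0)$, and $\operatorname{dist}(\mathbf{B}_T^{\mathrm{D\text{-}GD}},\mathbf{B}_\ast)\ge 0.7\,\delta_0$, where $\mathbf{B}_T^{\mathrm{D\text{-}GD}}$ is the representation produced after $T$ rounds of D-GD with step size $\alpha$ from $(\mathbf{B}_0,\mathbf{w}_0)$ in the system with ground-truth representation $\mathbf{B}_\ast$ and heads $\{\mathbf{w}_{\ast,i}\}$.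
   Context: Client $i$'s population loss is $f_i(\mathbf{B},\mathbf{w})=\tfrac12\|\mathbf{B}\mathbf{w}-\mathbf{B}_\ast\mathbf{w}_{\ast,i}\|_2^2$; $\bar{\mathbf{w}}_\ast=\frac1M\sum_i\mathbf{w}_{\ast,i}$. D-GD (distributed gradient descent, i.e. FedAvg with one local step and all clients participating) on $\frac1M\sum_i f_i$: $\mathbf{B}_{t+1}=\mathbf{B}_t-\alpha(\mathbf{B}_t\mathbf{w}_t-\mathbf{B}_\ast\bar{\mathbf{w}}_\ast)\mathbf{w}_t^\top$, $\mathbf{w}_{t+1}=\mathbf{w}_t-\alpha\mathbf{B}_t^\top(\mathbf{B}_t\mathbf{w}_t-\mathbf{B}_\ast\bar{\mathbf{w}}_\ast)$. Principal angle distance: for full-rank $\mathbf{B}_1,\mathbf{B}_2\in\mathbb{R}^{d\times k}$, $\operatorname{dist}(\mathbf{B}_1,\mathbf{B}_2)=\|\bar{\mathbf{B}}_{1,\perp}^\top\bar{\mathbf{B}}_2\|_2$, where the columns of $\bar{\mathbf{B}}_{1,\perp}$ and $\bar{\mathbf{B}}_2$ are orthonormal bases of $\operatorname{col}(\mathbf{B}_1)^\perp$ and $\operatorname{col}(\mathbf{B}_2)$. *)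

theory Defs
  imports "HOL-Analysis.Analysis"
begin

definition colsp :: "real^'k^'d \<Rightarrow> (real^'d) set" where
  "colsp B = span (columns B)"

definition is_onb :: "(real^'d) set \<Rightarrow> (real^'d) set \<Rightarrow> bool" where
  "is_onb P S \<longleftrightarrow> finite P \<and> P \<subseteq> S \<and> pairwise orthogonal P \<and>
     (\<forall>p\<in>P. norm p = 1) \<and> span P = S"

text \<open>Principal angle distance dist(B1,B2) = spectral norm of Bbar_{1,perp}^T Bbar_2,
  where Bbar_2 (d x k) has orthonormal columns spanning col(B2) and the columns of
  Bbar_{1,perp} form an orthonormal basis P of col(B1)^perp; for a vector y,
  the norm of Bbar_{1,perp}^T y is sqrt (sum over p in P of (p . y)^2).\<close>
definition pdist :: "real^'k^'d \<Rightarrow> real^'k^'d \<Rightarrow> real" where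
  "pdist B1 B2 =
    (let U = (SOME U :: real^'k^'d. transpose U ** U = mat 1 \<and> colsp U = colsp B2);
         P = (SOME P. is_onb P (orthogonal_comp (colsp B1)))
     in Sup {sqrt (\<Sum>p\<in>P. (p \<bullet> (U *v v))\<^sup>2) | v :: real^'k. norm v = 1})"

definition outer :: "real^'d \<Rightarrow> real^'k \<Rightarrow> real^'k^'d" where
  "outer r w = (\<chi> i j. r $ i * w $ j)"

text \<open>One D-GD step on (1/M) sum_i f_i with target y = B_* wbar_*.\<close>
definition dgd_step :: "real \<Rightarrow> real^'d \<Rightarrow> ((real^'k^'d) \<times> (real^'k)) \<Rightarrow> ((real^'k^'d) \<times> (real^'k))" where
  "dgd_step \<alpha> y Bw = (let B = fst Bw; w = snd Bw; r = B *v w - y in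
     (B - \<alpha> *\<^sub>R outer r w, w - \<alpha> *\<^sub>R (transpose B *v r)))"

definition wbar :: "nat \<Rightarrow> (nat \<Rightarrow> real^'k) \<Rightarrow> real^'k" where
  "wbar M ws = (1 / real M) *\<^sub>R (\<Sum>i=1..M. ws i)"

definition dgd :: "real \<Rightarrow> real^'k^'d \<Rightarrow> nat \<Rightarrow> (nat \<Rightarrow> real^'k) \<Rightarrow>
    real^'k^'d \<Rightarrow> real^'k \<Rightarrow> nat \<Rightarrow> (real^'k^'d) \<times> (real^'k)" where
  "dgd \<alpha> Bs M ws B0 w0 t = (dgd_step \<alpha> (Bs *v wbar M ws) ^^ t) (B0, w0)"

end

theory Submission
  imports Defs
begin

text \<open>If the averaged target \<open>B\<^sub>* w\<^sub>*\<close> lies in \<open>col(B\<^sub>0)\<close>, every D-GD update of \<open>B\<close> adds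
  multiples of \<open>B w\<close> and of the target, so \<open>col(B\<^sub>T) \<subseteq> col(B\<^sub>0)\<close> for all \<open>T\<close>; shrinking the first
  argument of the principal angle distance can only increase it, hence
  \<open>dist(B\<^sub>T, B\<^sub>*) \<ge> dist(B\<^sub>0, B\<^sub>*)\<close>. It remains to build an orthonormal \<open>B\<^sub>*\<close> at distance exactly
  \<open>\<delta>\<^sub>0\<close> from \<open>B\<^sub>0\<close> with \<open>B\<^sub>* w\<^sub>* \<in> col(B\<^sub>0)\<close>: start from an orthonormal basis \<open>G\<close> of \<open>col(B\<^sub>0)\<close>,
  pick a unit \<open>u \<perp> w\<^sub>*\<close> (possible as \<open>k > 1\<close>) and a unit \<open>e \<perp> col(B\<^sub>0)\<close> (possible as \<open>d > k\<close>), and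
  rotate the column direction \<open>G u\<close> towards \<open>e\<close> by the angle whose sine is \<open>\<delta>\<^sub>0\<close>.\<close>

definition onb_coord_norm :: "(real^'d) set \<Rightarrow> real^'d \<Rightarrow> real" where
  "onb_coord_norm P x = sqrt (\<Sum>p\<in>P. (p \<bullet> x)\<^sup>2)"

lemma is_onb_exists:
  fixes S :: "(real^'d) set"
  assumes "subspace S"
  shows "\<exists>P. is_onb P S"
proof -
  obtain P where "P \<subseteq> S" "pairwise orthogonal P" "\<And>x. x \<in> P \<Longrightarrow> norm x = 1"
    "independent P" "span P = S"
    using orthonormal_basis_subspace[OF assms] by metis
  then show ?thesis unfolding is_onb_def using independent_imp_finite by blast
qed

lemma is_onb_expansion:
  assumes P: "is_onb P S" and t: "t \<in> S"
  shows "(\<Sum>p\<in>P. (p \<bullet> t) *\<^sub>R p) = t"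
proof -
  have "t \<in> span P" using P t by (simp add: is_onb_def)
  then show ?thesis
  proof (induction rule: span_induct)
    case (step b)
    have "(p \<bullet> b) *\<^sub>R p = (if p = b then p else 0)" if "p \<in> P" for p
      using P that step
      by (auto simp: is_onb_def pairwise_def orthogonal_def norm_eq_1)
    then show ?case using P step by (simp add: is_onb_def sum.delta cong: sum.cong)
  next
    case base
    show ?case unfolding subspace_def
      by (simp add: inner_add_right scaleR_add_left sum.distrib flip: scaleR_scaleR scaleR_sum_right)
  qed
qed

lemma is_onb_parseval:
  assumes P: "is_onb P S" and t: "t \<in> S"
  shows "(\<Sum>p\<in>P. (p \<bullet> t)\<^sup>2) = (norm t)\<^sup>2"
proof -
  have "(norm t)\<^sup>2 = t \<bullet> (\<Sum>p\<in>P. (p \<bullet> t) *\<^sub>R p)"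
    by (simp add: is_onb_expansion[OF P t] power2_norm_eq_inner)
  also have "\<dots> = (\<Sum>p\<in>P. (p \<bullet> t)\<^sup>2)"
    by (simp add: inner_sum_right power2_eq_square inner_commute)
  finally show ?thesis by simp
qed

lemma onb_coord_norm_orthogonal_comp:
  assumes P: "is_onb P (orthogonal_comp S)"
    and s: "s \<in> S" and t: "t \<in> orthogonal_comp S"
  shows "onb_coord_norm P (s + t) = norm t"
proof -
  have "p \<bullet> s = 0" if "p \<in> P" for p
    using P that s by (auto simp: is_onb_def orthogonal_comp_def orthogonal_def inner_commute)
  then have "(\<Sum>p\<in>P. (p \<bullet> (s + t))\<^sup>2) = (\<Sum>p\<in>P. (p \<bullet> t)\<^sup>2)"
    by (simp add: inner_add_right)
  also have "\<dots> = (norm t)\<^sup>2" using is_onb_parseval[OF P t] .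
  finally show ?thesis by (simp add: onb_coord_norm_def)
qed

lemma orthogonal_comp_decomp:
  fixes x :: "real^'d"
  obtains s t where "s \<in> span X" "t \<in> orthogonal_comp (span X)" "x = s + t"
proof -
  obtain s t where "s \<in> span X" "\<And>w. w \<in> span X \<Longrightarrow> orthogonal t w" "x = s + t"
    using orthogonal_subspace_decomp_exists by metis
  moreover from this(2) have "t \<in> orthogonal_comp (span X)"
    by (simp add: orthogonal_comp_def orthogonal_commute)
  ultimately show ?thesis using that by blast
qed

lemma onb_coord_norm_antimono:
  fixes x :: "real^'d"
  assumes XY: "span X \<subseteq> span Y"
    and P: "is_onb P (orthogonal_comp (span X))"
    and Q: "is_onb Q (orthogonal_comp (span Y))"
  shows "onb_coord_norm Q x \<le> onb_coord_norm P x"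
proof -
  obtain s t where s: "s \<in> span X" and t: "t \<in> orthogonal_comp (span X)" and x: "x = s + t"
    using orthogonal_comp_decomp by blast
  obtain s' t' where s': "s' \<in> span Y" and t': "t' \<in> orthogonal_comp (span Y)"
    and x': "x = s' + t'"
    using orthogonal_comp_decomp by blast
  have "s' - s \<in> span Y" using s s' XY by (auto intro: span_diff)
  then have "orthogonal t' (s' - s)"
    using t' by (auto simp: orthogonal_comp_def orthogonal_commute)
  moreover have "t = t' + (s' - s)" using x x' by (simp add: algebra_simps)
  ultimately have "(norm t)\<^sup>2 = (norm t')\<^sup>2 + (norm (s' - s))\<^sup>2"
    using norm_add_Pythagorean by simp
  then have "norm t' \<le> norm t" by (smt (verit) norm_ge_zero power2_le_imp_le zero_le_power2)
  then show ?thesis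
    using onb_coord_norm_orthogonal_comp[OF P s t] onb_coord_norm_orthogonal_comp[OF Q s' t'] x x'
    by simp
qed

lemma onb_coord_norm_le_norm:
  fixes x :: "real^'d"
  assumes P: "is_onb P (orthogonal_comp (span X))"
  shows "onb_coord_norm P x \<le> norm x"
proof -
  obtain s t where s: "s \<in> span X" and t: "t \<in> orthogonal_comp (span X)" and x: "x = s + t"
    using orthogonal_comp_decomp by blast
  have "orthogonal s t" using s t by (auto simp: orthogonal_comp_def)
  then have "(norm x)\<^sup>2 = (norm s)\<^sup>2 + (norm t)\<^sup>2" using norm_add_Pythagorean x by simp
  then have "norm t \<le> norm x" by (smt (verit) norm_ge_zero power2_le_imp_le zero_le_power2)
  then show ?thesis using onb_coord_norm_orthogonal_comp[OF P s t] x by simp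
qed

lemma orthonormal_cols_inner:
  fixes A :: "real^'k^'d"
  assumes "transpose A ** A = mat 1"
  shows "(A *v v) \<bullet> (A *v w) = v \<bullet> w"
proof -
  have "(A *v v) \<bullet> (A *v w) = v \<bullet> (transpose A *v (A *v w))"
    by (metis dot_lmul_matrix vector_transpose_matrix)
  also have "\<dots> = v \<bullet> w" by (simp add: matrix_vector_mul_assoc assms)
  finally show ?thesis .
qed

lemma orthonormal_cols_norm:
  fixes A :: "real^'k^'d"
  assumes "transpose A ** A = mat 1"
  shows "norm (A *v v) = norm v"
  using orthonormal_cols_inner[OF assms, of v v] by (simp add: norm_eq_sqrt_inner)

lemma orthonormal_colsI:
  fixes A :: "real^'k^'d"
  assumes "\<And>v w. (A *v v) \<bullet> (A *v w) = v \<bullet> w"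
  shows "transpose A ** A = mat 1"
proof -
  have "(transpose A ** A) *v w = w" for w
  proof -
    define z where "z = (transpose A ** A) *v w - w"
    have "z \<bullet> ((transpose A ** A) *v w) = (A *v z) \<bullet> (A *v w)"
      by (metis dot_lmul_matrix matrix_vector_mul_assoc vector_transpose_matrix)
    then have "z \<bullet> z = 0" using assms[of z w] by (simp add: z_def inner_diff_right)
    then show ?thesis by (simp add: z_def)
  qed
  then show ?thesis by (simp add: matrix_eq)
qed

lemma colsp_eq_range:
  fixes A :: "real^'k^'d"
  shows "colsp A = range ((*v) A)"
proof
  show "colsp A \<subseteq> range ((*v) A)"
    unfolding colsp_def
  proof (rule span_minimal)
    show "columns A \<subseteq> range ((*v) A)"
      by (auto simp: columns_image_basis)
    show "subspace (range ((*v) A))"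
      by (rule linear_subspace_image[OF matrix_vector_mul_linear subspace_UNIV])
  qed
  show "range ((*v) A) \<subseteq> colsp A"
    using matrix_vector_mult_in_columnspace by (auto simp: colsp_def)
qed

lemma outer_mult: "outer r w *v v = (w \<bullet> v) *\<^sub>R r"
  by (simp add: vec_eq_iff outer_def matrix_vector_mult_def inner_vec_def sum_distrib_left
      mult.commute mult.left_commute)

lemma dgd_step_colsp_subset:
  assumes S: "subspace S" and y: "y \<in> S" and B: "colsp (fst Bw) \<subseteq> S"
  shows "colsp (fst (dgd_step \<alpha> y Bw)) \<subseteq> S"
proof -
  obtain B w where Bw: "Bw = (B, w)" by fastforce
  have Bv: "B *v v \<in> S" for v using B Bw by (auto simp: colsp_eq_range)
  have "(B - \<alpha> *\<^sub>R outer (B *v w - y) w) *v v = B *v v - (\<alpha> * (w \<bullet> v)) *\<^sub>R (B *v w - y)" for v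
    by (simp add: matrix_vector_mult_diff_rdistrib outer_mult flip: scaleR_matrix_vector_assoc)
  then show ?thesis
    using Bv y S by (auto simp: Bw dgd_step_def Let_def colsp_eq_range subspace_diff subspace_scale)
qed

lemma dgd_colsp_subset:
  assumes "Bs *v wbar M ws \<in> colsp B0"
  shows "colsp (fst (dgd \<alpha> Bs M ws B0 w0 t)) \<subseteq> colsp B0"
proof (induction t)
  case (Suc t)
  have "subspace (colsp B0)" by (simp add: colsp_def)
  with assms Suc show ?case
    using dgd_step_colsp_subset[of "colsp B0"] by (simp add: dgd_def)
qed (simp add: dgd_def)

lemma orthonormal_cols_image_sphere:
  fixes U V :: "real^'k^'d"
  assumes U: "transpose U ** U = mat 1" and V: "transpose V ** V = mat 1"
    and UV: "colsp U = colsp V"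
  shows "{f (U *v v) | v. norm v = 1} \<subseteq> {f (V *v v) | v. norm v = 1}"
proof clarify
  fix v :: "real^'k" assume v: "norm v = 1"
  obtain v' where v': "U *v v = V *v v'" using UV by (auto simp: colsp_eq_range)
  have "norm v' = 1"
    using orthonormal_cols_norm[OF U, of v] orthonormal_cols_norm[OF V, of v'] v' v by simp
  with v' show "\<exists>v'. f (U *v v) = f (V *v v') \<and> norm v' = 1" by metis
qed

lemma pdist_orthonormal:
  fixes B1 B2 :: "real^'k^'d"
  assumes B2: "transpose B2 ** B2 = mat 1"
  shows "pdist B1 B2 = Sup {onb_coord_norm (SOME P. is_onb P (orthogonal_comp (colsp B1))) (B2 *v v)
                            | v. norm v = 1}"
proof -
  define U where "U = (SOME U :: real^'k^'d. transpose U ** U = mat 1 \<and> colsp U = colsp B2)"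
  have U_ex: "\<exists>U :: real^'k^'d. transpose U ** U = mat 1 \<and> colsp U = colsp B2"
    using B2 by blast
  have U: "transpose U ** U = mat 1" "colsp U = colsp B2"
    using someI_ex[OF U_ex] unfolding U_def by blast+
  have sphere: "{f (U *v v) | v. norm v = 1} = {f (B2 *v v) | v. norm v = 1}" for f :: "real^'d \<Rightarrow> real"
    using orthonormal_cols_image_sphere[OF U(1) B2 U(2)]
      orthonormal_cols_image_sphere[OF B2 U(1) U(2)[symmetric]] by (rule antisym)
  show ?thesis
    unfolding pdist_def Let_def U_def[symmetric] onb_coord_norm_def[symmetric]
    by (rule arg_cong[where f=Sup, OF sphere])
qed

lemma pdist_antimono:
  fixes B0 B1 B2 :: "real^'k^'d"
  assumes B2: "transpose B2 ** B2 = mat 1" and sub: "colsp B1 \<subseteq> colsp B0"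
  shows "pdist B0 B2 \<le> pdist B1 B2"
proof -
  define P0 where "P0 = (SOME P. is_onb P (orthogonal_comp (colsp B0)))"
  define P1 where "P1 = (SOME P. is_onb P (orthogonal_comp (colsp B1)))"
  have P0: "is_onb P0 (orthogonal_comp (span (columns B0)))"
    unfolding P0_def colsp_def by (rule someI_ex[OF is_onb_exists[OF subspace_orthogonal_comp]])
  have P1: "is_onb P1 (orthogonal_comp (span (columns B1)))"
    unfolding P1_def colsp_def by (rule someI_ex[OF is_onb_exists[OF subspace_orthogonal_comp]])
  have le1: "onb_coord_norm P1 (B2 *v v) \<le> 1" if "norm v = 1" for v
    using onb_coord_norm_le_norm[OF P1, of "B2 *v v"] orthonormal_cols_norm[OF B2] that by simp
  have "bdd_above {onb_coord_norm P1 (B2 *v v) | v. norm v = 1}"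
    by (intro bdd_aboveI[where M=1]) (auto simp: le1)
  moreover have "{onb_coord_norm P0 (B2 *v v) | v. norm v = 1} \<noteq> {}"
    using norm_axis_1 by blast
  moreover have "onb_coord_norm P0 x \<le> onb_coord_norm P1 x" for x
    using onb_coord_norm_antimono[OF _ P1 P0] sub by (simp add: colsp_def)
  ultimately show ?thesis
    unfolding pdist_orthonormal[OF B2] P0_def[symmetric] P1_def[symmetric]
    by (intro cSup_mono) blast+
qed

lemma Sup_scaled_abs_inner_sphere:
  fixes u :: "'a::real_inner"
  assumes "norm u = 1" and "\<delta> \<ge> 0"
  shows "Sup {\<delta> * \<bar>u \<bullet> v\<bar> | v. norm v = 1} = \<delta>"
proof (rule cSup_eq_maximum)
  show "\<delta> \<in> {\<delta> * \<bar>u \<bullet> v\<bar> | v. norm v = 1}"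
    using assms by (auto simp: norm_eq_1 intro!: exI[of _ u])
next
  fix x assume "x \<in> {\<delta> * \<bar>u \<bullet> v\<bar> | v. norm v = 1}"
  then obtain v where "norm v = 1" "x = \<delta> * \<bar>u \<bullet> v\<bar>" by blast
  moreover have "\<bar>u \<bullet> v\<bar> \<le> 1" using Cauchy_Schwarz_ineq2[of u v] assms \<open>norm v = 1\<close> by simp
  ultimately show "x \<le> \<delta>" using assms(2) by (simp add: mult_left_le)
qed

lemma orthonormal_frame_in_subspace:
  fixes S :: "(real^'d) set"
  assumes S: "subspace S" and dimS: "dim S = CARD('k)"
  obtains G :: "real^'k^'d" where "transpose G ** G = mat 1" "\<And>v. G *v v \<in> S"
proof -
  obtain Q where Q: "Q \<subseteq> S" "pairwise orthogonal Q" "\<And>x. x \<in> Q \<Longrightarrow> norm x = 1"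
     "independent Q" "card Q = dim S"
    using orthonormal_basis_subspace[OF S] by metis
  obtain f where f: "bij_betw f (UNIV :: 'k set) Q"
    using bij_betw_iff_card[of "UNIV :: 'k set" Q] independent_imp_finite[OF Q(4)] Q(5) dimS
    by auto
  have fQ: "f j \<in> Q" for j using f by (auto simp: bij_betw_def)
  define G :: "real^'k^'d" where "G = (\<chi> i j. f j $ i)"
  have "f i \<bullet> f j = (if i = j then 1 else 0)" for i j
  proof (cases "i = j")
    case False
    then have "f i \<noteq> f j" using f by (auto simp: bij_betw_def inj_on_def)
    then show ?thesis using Q(2) fQ False by (auto simp: pairwise_def orthogonal_def)
  qed (simp add: Q(3)[OF fQ] flip: norm_eq_1)
  then have "transpose G ** G = mat 1"
    by (simp add: vec_eq_iff matrix_matrix_mult_def transpose_def mat_def G_def inner_vec_def)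
  moreover have "G *v v \<in> S" for v
  proof -
    have "columns G \<subseteq> S" using Q(1) fQ by (auto simp: columns_def column_def G_def)
    then show ?thesis
      using span_minimal[OF _ S] matrix_vector_mult_in_columnspace by blast
  qed
  ultimately show ?thesis using that by blast
qed

text \<open>The rank-one update replaces the column direction \<open>G u\<close> by \<open>c G u + \<delta> e\<close> and leaves the
  directions orthogonal to \<open>u\<close> untouched.\<close>

lemma tilted_frame_orthonormal:
  fixes G :: "real^'k^'d"
  assumes G: "transpose G ** G = mat 1"
    and u: "norm u = 1" and e: "norm e = 1" and Ge: "\<And>v. (G *v v) \<bullet> e = 0"
    and c: "c\<^sup>2 + \<delta>\<^sup>2 = 1"
  shows "transpose (G + outer ((c - 1) *\<^sub>R (G *v u) + \<delta> *\<^sub>R e) u)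
           ** (G + outer ((c - 1) *\<^sub>R (G *v u) + \<delta> *\<^sub>R e) u) = mat 1"
    (is "transpose ?B ** ?B = _")
proof (rule orthonormal_colsI)
  define z where "z = (c - 1) *\<^sub>R (G *v u) + \<delta> *\<^sub>R e"
  have Bv: "?B *v v = G *v v + (u \<bullet> v) *\<^sub>R z" for v
    unfolding z_def[symmetric] by (simp add: matrix_vector_mult_add_rdistrib outer_mult)
  have Gz: "(G *v v) \<bullet> z = (c - 1) * (u \<bullet> v)" for v
    using orthonormal_cols_inner[OF G, of v u] Ge[of v] inner_commute[of v u]
    by (simp add: z_def inner_add_right)
  have zz: "z \<bullet> z = (c - 1)\<^sup>2 + \<delta>\<^sup>2"
    using orthonormal_cols_inner[OF G, of u u] Ge[of u] u e
    by (simp add: z_def inner_add_left inner_commute power2_eq_square norm_eq_1 algebra_simps)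
  fix v w :: "real^'k"
  have "(?B *v v) \<bullet> (?B *v w) = (G *v v + (u \<bullet> v) *\<^sub>R z) \<bullet> (G *v w + (u \<bullet> w) *\<^sub>R z)"
    by (simp only: Bv)
  also have "\<dots> = (G *v v) \<bullet> (G *v w) + (u \<bullet> w) * ((G *v v) \<bullet> z)
       + (u \<bullet> v) * ((G *v w) \<bullet> z) + (u \<bullet> v) * (u \<bullet> w) * (z \<bullet> z)"
    by (simp add: inner_add_left inner_add_right inner_commute algebra_simps)
  also have "\<dots> = v \<bullet> w + (u \<bullet> v) * (u \<bullet> w) * (c\<^sup>2 + \<delta>\<^sup>2 - 1)"
    by (simp add: orthonormal_cols_inner[OF G] Gz zz algebra_simps power2_eq_square)
  finally show "(?B *v v) \<bullet> (?B *v w) = v \<bullet> w" using c by simp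
qed

lemma exists_orthonormal_at_pdist:
  fixes B0 :: "real^'k^'d" and w :: "real^'k"
  assumes dk: "CARD('d) > CARD('k)" and k: "CARD('k) > 1"
    and rank: "rank B0 = CARD('k)" and \<delta>: "0 \<le> \<delta>" "\<delta> \<le> 1"
  obtains Bs :: "real^'k^'d"
  where "transpose Bs ** Bs = mat 1" "pdist B0 Bs = \<delta>" "Bs *v w \<in> colsp B0"
proof -
  define S where "S = colsp B0"
  have S: "subspace S" by (simp add: S_def colsp_def)
  have dim_cols: "dim (columns B0) = CARD('k)" using rank by (simp add: column_rank_def)
  obtain G :: "real^'k^'d" where G: "transpose G ** G = mat 1" and GS: "\<And>v. G *v v \<in> S"
    using orthonormal_frame_in_subspace[OF S] dim_cols by (auto simp: S_def colsp_def dim_span)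
  obtain x :: "real^'d" where x: "x \<noteq> 0" "\<And>y. y \<in> S \<Longrightarrow> orthogonal x y"
    using orthogonal_to_subspace_exists[of "columns B0"] dim_cols dk by (auto simp: S_def colsp_def)
  define e where "e = x /\<^sub>R norm x"
  have e: "norm e = 1" "\<And>y. y \<in> S \<Longrightarrow> y \<bullet> e = 0"
    using x by (auto simp: e_def orthogonal_def inner_commute)
  obtain y :: "real^'k" where y: "y \<noteq> 0" "orthogonal w y"
    using orthogonal_to_vector_exists[of w] k by auto
  define u where "u = y /\<^sub>R norm y"
  have u: "norm u = 1" "u \<bullet> w = 0"
    using y by (auto simp: u_def orthogonal_def inner_commute)
  define c where "c = sqrt (1 - \<delta>\<^sup>2)"
  have c: "c\<^sup>2 + \<delta>\<^sup>2 = 1" using \<delta> by (simp add: c_def power_le_one)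
  define Bs where "Bs = G + outer ((c - 1) *\<^sub>R (G *v u) + \<delta> *\<^sub>R e) u"
  have Bs: "transpose Bs ** Bs = mat 1"
    unfolding Bs_def using tilted_frame_orthonormal[OF G u(1) e(1) _ c] e(2)[OF GS] by blast
  have Bsv: "Bs *v v = (G *v v + ((u \<bullet> v) * (c - 1)) *\<^sub>R (G *v u)) + ((u \<bullet> v) * \<delta>) *\<^sub>R e" for v
    by (simp add: Bs_def matrix_vector_mult_add_rdistrib outer_mult algebra_simps)
  define P where "P = (SOME P. is_onb P (orthogonal_comp (colsp B0)))"
  have P: "is_onb P (orthogonal_comp S)"
    unfolding P_def S_def by (rule someI_ex[OF is_onb_exists[OF subspace_orthogonal_comp]])
  have "onb_coord_norm P (Bs *v v) = \<delta> * \<bar>u \<bullet> v\<bar>" for v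
  proof -
    have "G *v v + ((u \<bullet> v) * (c - 1)) *\<^sub>R (G *v u) \<in> S"
      using GS S by (simp add: subspace_add subspace_scale)
    moreover have "((u \<bullet> v) * \<delta>) *\<^sub>R e \<in> orthogonal_comp S"
      using e(2) by (auto simp: orthogonal_comp_def orthogonal_def inner_commute)
    ultimately show ?thesis
      using onb_coord_norm_orthogonal_comp[OF P] \<delta>(1) e(1) by (simp add: Bsv abs_mult)
  qed
  then have "pdist B0 Bs = \<delta>"
    using Sup_scaled_abs_inner_sphere[OF u(1) \<delta>(1)] by (simp add: pdist_orthonormal[OF Bs] P_def)
  moreover have "Bs *v w \<in> colsp B0"
    using GS[of w] by (simp add: Bsv u(2) S_def)
  ultimately show ?thesis using that Bs by blast
qed

theorem proposition1:
  fixes ws :: "nat \<Rightarrow> real^'k" and B0 :: "real^'k^'d" and w0 :: "real^'k"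
    and M T :: nat and \<delta>0 \<alpha> :: real
  assumes "CARD('d) > CARD('k)" and "CARD('k) > 1"
    and "M \<ge> 1"
    and "rank B0 = CARD('k)"
    and "0 < \<delta>0" and "\<delta>0 \<le> 1/2"
    and "\<alpha> > 0"
  shows "\<exists>Bs :: real^'k^'d. transpose Bs ** Bs = mat 1
           \<and> pdist B0 Bs = \<delta>0
           \<and> Bs *v wbar M ws \<in> colsp B0
           \<and> pdist (fst (dgd \<alpha> Bs M ws B0 w0 T)) Bs \<ge> 0.7 * \<delta>0"
proof -
  obtain Bs :: "real^'k^'d" where Bs: "transpose Bs ** Bs = mat 1" "pdist B0 Bs = \<delta>0"
    and target: "Bs *v wbar M ws \<in> colsp B0"
    using exists_orthonormal_at_pdist[of B0 \<delta>0 "wbar M ws"] assms(1,2,4,5,6) by auto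
  have "pdist B0 Bs \<le> pdist (fst (dgd \<alpha> Bs M ws B0 w0 T)) Bs"
    using pdist_antimono[OF Bs(1) dgd_colsp_subset[OF target]] .
  with Bs target assms(5) show ?thesis by auto
qed

end
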